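(* No deterministic mechanism that is truthful without money and with verification for CAs with known $2$-minded bidders has approximation ratio strictly less than $2$. This holds even restricted to instances with $n=2$ bidders and $m=2$ goods (and no computational restriction on the mechanism).
   Context: Combinatorial auction with a set $\mathsf U$ of $m$ goods (single copy each) and $n$ bidders; bidder $i$ has a public collection $\mathcal S_i$ of $k$ nonempty subsets of $\mathsf U$ (known bidders; here $k=2$) and a private valuation $v_i:\mathcal S_i\to\mathbb R_{\ge0}$, extended by $v_i(T)=\max\{v_i(S'):S'\in\mathcal S_i,S'\subseteq T\}$ ($0$ if none). A declaration is any valuation $b_i:\mathcal S_i\to\mathbb R_{\ge0}$. A mechanism maps declarations to pairwise disjoint sets with $A_i(\mathbf b)\in\mathcal S_i\cup\{\emptyset\}$. Verification: bidder $i$ with true valuation $v_i$ facing $\mathbf b_{-i}$ may declare $b_i$ only if $b_i(A_i(b_i,\mathbf b_{-i}))\le v_i(A_i(b_i,\mathbf b_{-i}))$. Truthful without money and with verification: for all $i$, $\mathbf b_{-i}$, true $v_i$ and permitted $b_i$, $v_i(A_i(v_i,\mathbf b_{-i}))\ge v_i(A_i(b_i,\mathbf b_{-i}))$. Approximation ratio $\alpha$: on every truthful input, $\sum_i v_i(A_i)\ge\mathrm{OPT}/\alpha$, where $\mathrm{OPT}$ is the maximum welfare of a feasible allocation. *)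

theory Defs
  imports Complex_Main
begin

text \<open>S i is the public collection of bidder i; declarations / valuations are
  functions on sets, required to be nonnegative on S i and zero elsewhere
  (they are only meaningful on S i).\<close>

definition valid_collections :: "'g set \<Rightarrow> nat \<Rightarrow> nat \<Rightarrow> (nat \<Rightarrow> 'g set set) \<Rightarrow> bool" where
  "valid_collections U n k S \<longleftrightarrow>
     (\<forall>i<n. S i \<subseteq> {T. T \<noteq> {} \<and> T \<subseteq> U} \<and> card (S i) = k)"

definition valid_decl :: "'g set set \<Rightarrow> ('g set \<Rightarrow> real) \<Rightarrow> bool" where
  "valid_decl C b \<longleftrightarrow> (\<forall>T\<in>C. b T \<ge> 0) \<and> (\<forall>T. T \<notin> C \<longrightarrow> b T = 0)"

definition valid_profile :: "nat \<Rightarrow> (nat \<Rightarrow> 'g set set) \<Rightarrow> (nat \<Rightarrow> 'g set \<Rightarrow> real) \<Rightarrow> bool" where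
  "valid_profile n S b \<longleftrightarrow> (\<forall>i<n. valid_decl (S i) (b i))"

definition ext_val :: "'g set set \<Rightarrow> ('g set \<Rightarrow> real) \<Rightarrow> 'g set \<Rightarrow> real" where
  "ext_val C v T = (if \<exists>S'\<in>C. S' \<subseteq> T then Max (v ` {S'\<in>C. S' \<subseteq> T}) else 0)"

definition feasible_alloc :: "nat \<Rightarrow> (nat \<Rightarrow> 'g set set) \<Rightarrow> (nat \<Rightarrow> 'g set) \<Rightarrow> bool" where
  "feasible_alloc n S X \<longleftrightarrow>
     (\<forall>i<n. X i \<in> S i \<union> {{}}) \<and> (\<forall>i<n. \<forall>j<n. i \<noteq> j \<longrightarrow> X i \<inter> X j = {})"

definition welfare :: "nat \<Rightarrow> (nat \<Rightarrow> 'g set set) \<Rightarrow> (nat \<Rightarrow> 'g set \<Rightarrow> real) \<Rightarrow> (nat \<Rightarrow> 'g set) \<Rightarrow> real" where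
  "welfare n S v X = (\<Sum>i<n. ext_val (S i) (v i) (X i))"

definition OPT :: "nat \<Rightarrow> (nat \<Rightarrow> 'g set set) \<Rightarrow> (nat \<Rightarrow> 'g set \<Rightarrow> real) \<Rightarrow> real" where
  "OPT n S v = Max {welfare n S v X | X. feasible_alloc n S X}"

type_synonym 'g mechanism = "(nat \<Rightarrow> 'g set set) \<Rightarrow> (nat \<Rightarrow> 'g set \<Rightarrow> real) \<Rightarrow> nat \<Rightarrow> 'g set"

definition is_mechanism :: "'g set \<Rightarrow> nat \<Rightarrow> nat \<Rightarrow> 'g mechanism \<Rightarrow> bool" where
  "is_mechanism U n k M \<longleftrightarrow>
     (\<forall>S b. valid_collections U n k S \<longrightarrow> valid_profile n S b \<longrightarrow> feasible_alloc n S (M S b))"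

definition truthful_verif :: "'g set \<Rightarrow> nat \<Rightarrow> nat \<Rightarrow> 'g mechanism \<Rightarrow> bool" where
  "truthful_verif U n k M \<longleftrightarrow>
     (\<forall>S b i vi bi. valid_collections U n k S \<longrightarrow> valid_profile n S b \<longrightarrow> i < n \<longrightarrow>
        valid_decl (S i) vi \<longrightarrow> valid_decl (S i) bi \<longrightarrow>
        ext_val (S i) bi (M S (b(i := bi)) i) \<le> ext_val (S i) vi (M S (b(i := bi)) i) \<longrightarrow>
        ext_val (S i) vi (M S (b(i := vi)) i) \<ge> ext_val (S i) vi (M S (b(i := bi)) i))"

definition approx_ratio :: "'g set \<Rightarrow> nat \<Rightarrow> nat \<Rightarrow> 'g mechanism \<Rightarrow> real \<Rightarrow> bool" where
  "approx_ratio U n k M \<alpha> \<longleftrightarrow> \<alpha> > 0 \<and>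
     (\<forall>S v. valid_collections U n k S \<longrightarrow> valid_profile n S v \<longrightarrow>
        welfare n S v (M S v) \<ge> OPT n S v / \<alpha>)"

end

theory Submission
  imports Defs "HOL-Library.FuncSet"
begin

text \<open>Both bidders want one of two goods a, b, and both declare a value of 1 for b only. A
  mechanism with ratio below 2 must give b to someone, say bidder i. If i's true value for a is
  raised to x = \<alpha>/2 < 1, then OPT \<ge> 1 + x > \<alpha>, so the welfare must exceed 1,
  which forces i to receive a. But the declaration (0,1) keeps b for i and is permitted under
  verification, since i's claimed value of b is true; so i would gain by lying.\<close>

lemma welfare_restrict: "welfare n S v (restrict X {..<n}) = welfare n S v X"
  by (simp add: welfare_def)

lemma welfare_le_OPT:
  assumes "\<And>i. i < n \<Longrightarrow> finite (S i)" and "feasible_alloc n S X"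
  shows "welfare n S v X \<le> OPT n S v"
proof -
  let ?A = "PiE {..<n} (\<lambda>i. S i \<union> {{}})"
  have "{welfare n S v Y | Y. feasible_alloc n S Y} \<subseteq> welfare n S v ` ?A"
  proof clarify
    fix Y assume "feasible_alloc n S Y"
    then have "restrict Y {..<n} \<in> ?A" by (auto simp: feasible_alloc_def)
    then show "welfare n S v Y \<in> welfare n S v ` ?A"
      by (metis image_eqI welfare_restrict)
  qed
  moreover have "finite (welfare n S v ` ?A)"
    using assms(1) by (intro finite_imageI finite_PiE) auto
  ultimately show ?thesis
    unfolding OPT_def using assms(2) by (blast intro: Max_ge finite_subset)
qed

lemma welfare_two_bidders:
  assumes "i < 2"
  shows "welfare 2 S v X =
    ext_val (S i) (v i) (X i) + ext_val (S (1 - i)) (v (1 - i)) (X (1 - i))"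
  using assms by (cases i) (auto simp: welfare_def numeral_2_eq_2)

lemma feasible_alloc_two_bidders:
  assumes "i < 2"
  shows "feasible_alloc 2 S X \<longleftrightarrow>
    X i \<in> S i \<union> {{}} \<and> X (1 - i) \<in> S (1 - i) \<union> {{}} \<and> X i \<inter> X (1 - i) = {}"
  using assms unfolding feasible_alloc_def
  by (cases i) (auto simp: numeral_2_eq_2 less_Suc_eq)

definition unit_val :: "'g \<Rightarrow> 'g \<Rightarrow> real \<Rightarrow> real \<Rightarrow> 'g set \<Rightarrow> real" where
  "unit_val a b x y T = (if T = {a} then x else if T = {b} then y else 0)"

lemma valid_decl_unit_val:
  "a \<noteq> b \<Longrightarrow> 0 \<le> x \<Longrightarrow> 0 \<le> y \<Longrightarrow> valid_decl {{a}, {b}} (unit_val a b x y)"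
  unfolding valid_decl_def unit_val_def by auto

lemma unit_val_simps [simp]:
  "unit_val a b x y {a} = x"
  "a \<noteq> b \<Longrightarrow> unit_val a b x y {b} = y"
  "unit_val a b x y {} = 0"
  by (auto simp: unit_val_def)

lemma ext_val_unit_val:
  assumes "a \<noteq> b" and "T \<in> {{a}, {b}, {}}"
  shows "ext_val {{a}, {b}} (unit_val a b x y) T = unit_val a b x y T"
proof -
  have "{T' \<in> {{a}, {b}}. T' \<subseteq> {a}} = {{a}}" "{T' \<in> {{a}, {b}}. T' \<subseteq> {b}} = {{b}}"
    using assms(1) by auto
  then show ?thesis
    using assms by (auto simp: ext_val_def unit_val_def)
qed

context
  fixes a b :: 'g and S :: "nat \<Rightarrow> 'g set set" and P :: "nat \<Rightarrow> 'g set \<Rightarrow> real"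
  assumes a_neq_b: "a \<noteq> b"
    and S_eq: "S = (\<lambda>_. {{a}, {b}})"
    and P_eq: "P = (\<lambda>_. unit_val a b 0 1)"
begin

lemma OPT_ge_1: "1 \<le> OPT 2 S P"
proof -
  have "feasible_alloc 2 S ((\<lambda>_. {})(0 := {b}))"
    by (simp add: feasible_alloc_two_bidders[of 0] S_eq)
  from welfare_le_OPT[OF _ this, of P] show ?thesis
    by (simp add: S_eq P_eq welfare_two_bidders[of 0] ext_val_unit_val[OF a_neq_b] a_neq_b)
qed

lemma OPT_raised_ge:
  assumes "i < 2"
  shows "1 + x \<le> OPT 2 S (P(i := unit_val a b x 1))"
proof -
  have "1 - i \<noteq> i" using assms by arith
  have "feasible_alloc 2 S ((\<lambda>_. {})(i := {a}, 1 - i := {b}))"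
    using assms a_neq_b \<open>1 - i \<noteq> i\<close> by (simp add: feasible_alloc_two_bidders[of i] S_eq)
  from welfare_le_OPT[OF _ this, of "P(i := unit_val a b x 1)"] show ?thesis
    using assms \<open>1 - i \<noteq> i\<close>
    by (simp add: S_eq P_eq welfare_two_bidders[of i] ext_val_unit_val[OF a_neq_b] a_neq_b)
qed

lemma feasible_alloc_singletons:
  assumes "i < 2" and "feasible_alloc 2 S X"
  shows "X i \<in> {{a}, {b}, {}}" and "X (1 - i) \<in> {{a}, {b}, {}}" and "X i \<inter> X (1 - i) = {}"
  using assms by (auto simp: feasible_alloc_two_bidders S_eq)

lemma positive_welfare_gives_b:
  assumes "feasible_alloc 2 S X" and "0 < welfare 2 S P X"
  shows "\<exists>i<2. X i = {b}"
proof -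
  have X: "X 0 \<in> {{a}, {b}, {}}" "X 1 \<in> {{a}, {b}, {}}"
    using feasible_alloc_singletons[of 0, OF _ assms(1)] by auto
  have "welfare 2 S P X = ext_val {{a}, {b}} (unit_val a b 0 1) (X 0)
      + ext_val {{a}, {b}} (unit_val a b 0 1) (X 1)"
    by (simp add: welfare_two_bidders[of 0] S_eq P_eq)
  also have "\<dots> = unit_val a b 0 1 (X 0) + unit_val a b 0 1 (X 1)"
    by (simp only: ext_val_unit_val[OF a_neq_b X(1)] ext_val_unit_val[OF a_neq_b X(2)])
  finally have "X 0 = {b} \<or> X 1 = {b}"
    using assms(2) X by (auto simp: unit_val_def split: if_splits)
  then show ?thesis
    by (elim disjE) (auto intro: exI[of _ 0] exI[of _ 1])
qed

lemma welfare_above_1_gives_a: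
  assumes "i < 2" and "x < 1"
    and "feasible_alloc 2 S X" and "1 < welfare 2 S (P(i := unit_val a b x 1)) X"
  shows "X i = {a}"
proof -
  note X = feasible_alloc_singletons[OF assms(1,3)]
  have "1 - i \<noteq> i" using assms(1) by arith
  then have "welfare 2 S (P(i := unit_val a b x 1)) X =
      ext_val {{a}, {b}} (unit_val a b x 1) (X i)
      + ext_val {{a}, {b}} (unit_val a b 0 1) (X (1 - i))"
    using assms(1) by (simp add: welfare_two_bidders[of i] S_eq P_eq)
  also have "\<dots> = unit_val a b x 1 (X i) + unit_val a b 0 1 (X (1 - i))"
    by (simp only: ext_val_unit_val[OF a_neq_b X(1)] ext_val_unit_val[OF a_neq_b X(2)])
  finally show ?thesis
    using assms(2,4) X a_neq_b by (auto simp: unit_val_def)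
qed

lemma truthful_keeps_value_of_b:
  assumes "truthful_verif U 2 2 M" and "valid_collections U 2 2 S" and "i < 2"
    and "0 \<le> x" and "M S P i = {b}"
  shows "1 \<le> ext_val (S i) (unit_val a b x 1) (M S (P(i := unit_val a b x 1)) i)"
proof -
  have P_valid: "valid_profile 2 S P"
    by (simp add: valid_profile_def S_eq P_eq valid_decl_unit_val[OF a_neq_b])
  have "P(i := unit_val a b 0 1) = P"
    by (auto simp: P_eq)
  then show ?thesis
    using assms(1)[unfolded truthful_verif_def, rule_format, OF assms(2) P_valid assms(3),
        of "unit_val a b x 1" "unit_val a b 0 1"]
    using assms(4,5)
    by (simp add: S_eq valid_decl_unit_val[OF a_neq_b] ext_val_unit_val[OF a_neq_b] a_neq_b)
qed

end

theorem theorem11: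
  fixes U :: "'g set" and M :: "'g mechanism" and \<alpha> :: real
  assumes "finite U" and "card U = 2"
    and "is_mechanism U 2 2 M"
    and "truthful_verif U 2 2 M"
    and "\<alpha> < 2"
  shows "\<not> approx_ratio U 2 2 M \<alpha>"
proof
  assume ratio: "approx_ratio U 2 2 M \<alpha>"
  then have "0 < \<alpha>" by (simp add: approx_ratio_def)
  obtain a b where ab: "a \<noteq> b" "U = {a, b}" using assms(2) card_2_iff by metis
  define S :: "nat \<Rightarrow> 'g set set" where "S = (\<lambda>_. {{a}, {b}})"
  define P where "P = (\<lambda>_::nat. unit_val a b 0 1)"
  define x where "x = \<alpha> / 2"
  define Q where "Q i = P(i := unit_val a b x 1)" for i
  have S_valid: "valid_collections U 2 2 S" by (auto simp: valid_collections_def S_def ab)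
  have "valid_profile 2 S P" "valid_profile 2 S (Q i)" for i
    using \<open>0 < \<alpha>\<close> ab(1)
    by (simp_all add: valid_profile_def S_def P_def Q_def x_def valid_decl_unit_val)
  then have feasible: "feasible_alloc 2 S (M S P)" "feasible_alloc 2 S (M S (Q i))"
    and good: "OPT 2 S P / \<alpha> \<le> welfare 2 S P (M S P)"
      "OPT 2 S (Q i) / \<alpha> \<le> welfare 2 S (Q i) (M S (Q i))" for i
    using assms(3) ratio S_valid by (auto simp: is_mechanism_def approx_ratio_def)
  have "0 < OPT 2 S P / \<alpha>" using OPT_ge_1[OF ab(1) S_def P_def] \<open>0 < \<alpha>\<close> by simp
  then obtain i where i: "i < 2" "M S P i = {b}"
    using positive_welfare_gives_b[OF ab(1) S_def P_def feasible(1)] good(1) by auto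
  have "1 < (1 + x) / \<alpha>" using \<open>0 < \<alpha>\<close> assms(5) by (simp add: x_def field_simps)
  also have "\<dots> \<le> OPT 2 S (Q i) / \<alpha>"
    using OPT_raised_ge[OF ab(1) S_def P_def i(1)] \<open>0 < \<alpha>\<close>
    by (simp add: Q_def divide_right_mono)
  also have "\<dots> \<le> welfare 2 S (Q i) (M S (Q i))" by (rule good(2))
  finally have "M S (Q i) i = {a}"
    using welfare_above_1_gives_a[OF ab(1) S_def P_def i(1), of x "M S (Q i)"] feasible(2)
      assms(5) by (simp add: Q_def x_def)
  moreover have "1 \<le> ext_val (S i) (unit_val a b x 1) (M S (Q i) i)"
    unfolding Q_def using \<open>0 < \<alpha>\<close>
    by (intro truthful_keeps_value_of_b[OF ab(1) S_def P_def assms(4) S_valid i(1) _ i(2)])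
      (simp add: x_def)
  ultimately show False
    using ab(1) assms(5) by (simp add: S_def x_def ext_val_unit_val)
qed

end
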